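(* Let $\gamma\to_d\gamma'$ be a non-smooth d-step and let $k^*=\min\{\mathrm{rank}_\gamma(p,q) : (p,q)\in\mathrm{Edges},\ (p,q)\text{ non-smooth in }\gamma,\ \gamma'.p.d\ne\gamma.p.d \text{ or } \gamma'.q.d\neq\gamma.q.d\}$ (the set is nonempty). Then: (i) for every $e\in\mathrm{Edges}$, if $\mathrm{rank}_{\gamma'}(e)\le k^*$ and $e$ is non-smooth in $\gamma'$, then $\mathrm{rank}_\gamma(e)=\mathrm{rank}_{\gamma'}(e)$ and $e$ is non-smooth in $\gamma$; (ii) for every $e\in\mathrm{Edges}$, if $\mathrm{rank}_{\gamma}(e)<k^*$ and $e$ is non-smooth in $\gamma$, then $\mathrm{rank}_{\gamma'}(e)=\mathrm{rank}_{\gamma}(e)$ and $e$ is non-smooth in $\gamma'$; (iii) there exists $e\in\mathrm{Edges}$ with $\mathrm{rank}_\gamma(e)=k^*$, $e$ non-smooth in $\gamma$, and such that if $e$ is non-smooth in $\gamma'$ then $\mathrm{rank}_{\gamma'}(e)>\mathrm{rank}_\gamma(e)$.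
   Context: Let $G$ be a finite, connected, undirected graph with node set $V$ and a distinguished node $r$ (the root); $\mathrm{Edges}=\{(p,q)\in V\times V : p,q\text{ adjacent}\}$ (both orientations). Each node $p$ has a fixed ordered list $N(p)$ of its neighbours. A configuration $\gamma$ assigns to each node $p$ a value $\gamma.p.d\in\mathbb N$ and a neighbour $\gamma.p.par\in N(p)$. For a non-root $p$ let $Dist_p(\gamma)=\min\{\gamma.q.d+1 : q\in N(p)\}$. Algorithm BFS: Root enabled iff $\gamma.r.d\neq 0$, executing sets $r.d:=0$. Non-root $p$, action CD: enabled iff $\gamma.p.d\ne Dist_p(\gamma)$, executing sets $p.d:=Dist_p(\gamma)$. Non-root $p$, action CP: enabled iff $\gamma.p.d=Dist_p(\gamma)$ and $\gamma.q_0.d+1\neq\gamma.p.d$ with $q_0=\gamma.p.par$; executing sets $p.par$ to the first $q\in N(p)$ with $\gamma.q.d+1=\gamma.p.d$. A step $\gamma\to\gamma'$ holds iff a nonempty set $S$ of enabled nodes simultaneously execute their enabled action (evaluated in $\gamma$), others unchanged. A d-step $\gamma\to_d\gamma'$ is a step with $\gamma.r.d=\gamma'.r.d$ and $\gamma.p.d\neq\gamma'.p.d$ for some $p$. An edge $(p,q)$ is smooth in $\gamma$ if $|\gamma.p.d-\gamma.q.d|\le 1$, non-smooth otherwise. A d-step $\gamma\to_d\gamma'$ is smooth if every node $p$ with $\gamma'.p.d\neq\gamma.p.d$ has all its edges $(p,q)$, $q\in N(p)$, smooth in $\gamma$; otherwise it is non-smooth. $\mathrm{rank}_\gamma(p,q)=\min(\gamma.p.d,\gamma.q.d)$.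 *)

theory Defs
  imports Main
begin

record 'v cfg =
  dval :: "'v \<Rightarrow> nat"
  par  :: "'v \<Rightarrow> 'v"

definition Edges :: "'v set \<Rightarrow> ('v \<Rightarrow> 'v list) \<Rightarrow> ('v \<times> 'v) set" where
  "Edges V N = {(p, q). p \<in> V \<and> q \<in> set (N p)}"

definition bfs_graph :: "'v set \<Rightarrow> 'v \<Rightarrow> ('v \<Rightarrow> 'v list) \<Rightarrow> bool" where
  "bfs_graph V r N \<longleftrightarrow>
     finite V \<and> r \<in> V \<and>
     (\<forall>p\<in>V. set (N p) \<subseteq> V \<and> distinct (N p) \<and> p \<notin> set (N p)) \<and>
     (\<forall>p\<in>V. \<forall>q\<in>V. q \<in> set (N p) \<longleftrightarrow> p \<in> set (N q)) \<and>
     (\<forall>p\<in>V. (r, p) \<in> (Edges V N)\<^sup>*)"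

definition valid_cfg :: "'v set \<Rightarrow> ('v \<Rightarrow> 'v list) \<Rightarrow> 'v cfg \<Rightarrow> bool" where
  "valid_cfg V N \<gamma> \<longleftrightarrow> (\<forall>p\<in>V. par \<gamma> p \<in> set (N p))"

definition Dist :: "('v \<Rightarrow> 'v list) \<Rightarrow> 'v cfg \<Rightarrow> 'v \<Rightarrow> nat" where
  "Dist N \<gamma> p = Min {dval \<gamma> q + 1 | q. q \<in> set (N p)}"

definition root_enabled :: "'v \<Rightarrow> 'v cfg \<Rightarrow> bool" where
  "root_enabled r \<gamma> \<longleftrightarrow> dval \<gamma> r \<noteq> 0"

definition CD_enabled :: "'v \<Rightarrow> ('v \<Rightarrow> 'v list) \<Rightarrow> 'v cfg \<Rightarrow> 'v \<Rightarrow> bool" where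
  "CD_enabled r N \<gamma> p \<longleftrightarrow> p \<noteq> r \<and> dval \<gamma> p \<noteq> Dist N \<gamma> p"

definition CP_enabled :: "'v \<Rightarrow> ('v \<Rightarrow> 'v list) \<Rightarrow> 'v cfg \<Rightarrow> 'v \<Rightarrow> bool" where
  "CP_enabled r N \<gamma> p \<longleftrightarrow> p \<noteq> r \<and> dval \<gamma> p = Dist N \<gamma> p
      \<and> dval \<gamma> (par \<gamma> p) + 1 \<noteq> dval \<gamma> p"

definition enabled :: "'v set \<Rightarrow> 'v \<Rightarrow> ('v \<Rightarrow> 'v list) \<Rightarrow> 'v cfg \<Rightarrow> 'v \<Rightarrow> bool" where
  "enabled V r N \<gamma> p \<longleftrightarrow> p \<in> V \<and>
     (if p = r then root_enabled r \<gamma> else CD_enabled r N \<gamma> p \<or> CP_enabled r N \<gamma> p)"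

definition new_dval :: "'v \<Rightarrow> ('v \<Rightarrow> 'v list) \<Rightarrow> 'v cfg \<Rightarrow> 'v \<Rightarrow> nat" where
  "new_dval r N \<gamma> p =
     (if p = r then 0
      else if CD_enabled r N \<gamma> p then Dist N \<gamma> p
      else dval \<gamma> p)"

definition new_par :: "'v \<Rightarrow> ('v \<Rightarrow> 'v list) \<Rightarrow> 'v cfg \<Rightarrow> 'v \<Rightarrow> 'v" where
  "new_par r N \<gamma> p =
     (if p \<noteq> r \<and> CP_enabled r N \<gamma> p
      then hd (filter (\<lambda>q. dval \<gamma> q + 1 = dval \<gamma> p) (N p))
      else par \<gamma> p)"

definition step :: "'v set \<Rightarrow> 'v \<Rightarrow> ('v \<Rightarrow> 'v list) \<Rightarrow> 'v cfg \<Rightarrow> 'v cfg \<Rightarrow> bool" where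
  "step V r N \<gamma> \<gamma>' \<longleftrightarrow> (\<exists>S. S \<noteq> {} \<and> (\<forall>p\<in>S. enabled V r N \<gamma> p) \<and>
     (\<forall>p\<in>S. dval \<gamma>' p = new_dval r N \<gamma> p \<and> par \<gamma>' p = new_par r N \<gamma> p) \<and>
     (\<forall>p. p \<notin> S \<longrightarrow> dval \<gamma>' p = dval \<gamma> p \<and> par \<gamma>' p = par \<gamma> p))"

definition d_step :: "'v set \<Rightarrow> 'v \<Rightarrow> ('v \<Rightarrow> 'v list) \<Rightarrow> 'v cfg \<Rightarrow> 'v cfg \<Rightarrow> bool" where
  "d_step V r N \<gamma> \<gamma>' \<longleftrightarrow> step V r N \<gamma> \<gamma>' \<and> dval \<gamma> r = dval \<gamma>' r \<and>
     (\<exists>p. dval \<gamma> p \<noteq> dval \<gamma>' p)"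

definition smooth :: "'v cfg \<Rightarrow> 'v \<times> 'v \<Rightarrow> bool" where
  "smooth \<gamma> e \<longleftrightarrow> \<bar>int (dval \<gamma> (fst e)) - int (dval \<gamma> (snd e))\<bar> \<le> 1"

definition smooth_dstep :: "('v \<Rightarrow> 'v list) \<Rightarrow> 'v cfg \<Rightarrow> 'v cfg \<Rightarrow> bool" where
  "smooth_dstep N \<gamma> \<gamma>' \<longleftrightarrow>
     (\<forall>p. dval \<gamma>' p \<noteq> dval \<gamma> p \<longrightarrow> (\<forall>q\<in>set (N p). smooth \<gamma> (p, q)))"

definition rank :: "'v cfg \<Rightarrow> 'v \<times> 'v \<Rightarrow> nat" where
  "rank \<gamma> e = min (dval \<gamma> (fst e)) (dval \<gamma> (snd e))"

end

theory Submission
  imports Defs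
begin

text \<open>A node that moves in a d-step takes the value Dist, which is at most one more than any
  neighbour's old value and is attained at some neighbour. Let k bound from below the old ranks
  of the non-smooth edges with a moving endpoint. If an edge (p, q) is non-smooth after the step
  with d'(p) + 2 \<le> d'(q) and d'(p) \<le> k, then p cannot have moved: it would have copied a
  neighbour y with d(y) < k, which forces the edges (p, y) and (p, q) to have been smooth, and
  then q would have had to climb above d(p) + 1. Nor can q have moved, since it would then lie
  at most one above p. Everything in the theorem follows by comparing ranks with k.\<close>

definition changed_edge :: "'v cfg \<Rightarrow> 'v cfg \<Rightarrow> 'v \<times> 'v \<Rightarrow> bool" where
  "changed_edge \<gamma> \<gamma>' e \<longleftrightarrow>
     dval \<gamma>' (fst e) \<noteq> dval \<gamma> (fst e) \<or> dval \<gamma>' (snd e) \<noteq> dval \<gamma> (snd e)"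

lemma Dist_image: "{dval \<gamma> q + 1 | q. q \<in> set (N p)} = (\<lambda>q. dval \<gamma> q + 1) ` set (N p)"
  by auto

lemma Dist_le_neighbour: "q \<in> set (N p) \<Longrightarrow> Dist N \<gamma> p \<le> dval \<gamma> q + 1"
  unfolding Dist_def Dist_image by (intro Min_le) auto

lemma Dist_attained:
  assumes "set (N p) \<noteq> {}"
  obtains q where "q \<in> set (N p)" "Dist N \<gamma> p = dval \<gamma> q + 1"
proof -
  have "Dist N \<gamma> p \<in> (\<lambda>q. dval \<gamma> q + 1) ` set (N p)"
    unfolding Dist_def Dist_image using assms by (intro Min_in) auto
  then show ?thesis using that by blast
qed

lemma d_step_moved_node:
  assumes "d_step V r N \<gamma> \<gamma>'" and "dval \<gamma>' p \<noteq> dval \<gamma> p"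
  shows "p \<in> V \<and> dval \<gamma>' p = Dist N \<gamma> p"
proof -
  obtain S where S: "\<forall>p\<in>S. enabled V r N \<gamma> p" "\<forall>p\<in>S. dval \<gamma>' p = new_dval r N \<gamma> p"
    "\<forall>p. p \<notin> S \<longrightarrow> dval \<gamma>' p = dval \<gamma> p"
    using assms(1) unfolding d_step_def step_def by blast
  have "p \<in> S" using S(3) assms(2) by blast
  moreover have "p \<noteq> r" using assms unfolding d_step_def by auto
  ultimately show ?thesis
    using S assms(2) unfolding enabled_def new_dval_def by (auto split: if_splits)
qed

lemma Edges_sym: "bfs_graph V r N \<Longrightarrow> (p, q) \<in> Edges V N \<Longrightarrow> (q, p) \<in> Edges V N"
  unfolding bfs_graph_def Edges_def by blast

lemma finite_Edges: "bfs_graph V r N \<Longrightarrow> finite (Edges V N)"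
  unfolding bfs_graph_def Edges_def
  by (rule finite_subset[of _ "V \<times> V"]) auto

lemma not_smooth_iff:
  "\<not> smooth \<gamma> (p, q) \<longleftrightarrow> dval \<gamma> p + 2 \<le> dval \<gamma> q \<or> dval \<gamma> q + 2 \<le> dval \<gamma> p"
  unfolding smooth_def by auto

lemma unchanged_edge_rank_smooth:
  "\<not> changed_edge \<gamma> \<gamma>' e \<Longrightarrow> rank \<gamma>' e = rank \<gamma> e \<and> smooth \<gamma>' e = smooth \<gamma> e"
  unfolding changed_edge_def rank_def smooth_def by simp

lemma steep_edge_unchanged:
  assumes moves: "\<And>x. dval \<gamma>' x \<noteq> dval \<gamma> x \<Longrightarrow> dval \<gamma>' x = Dist N \<gamma> x"
    and below: "\<And>e. e \<in> Edges V N \<Longrightarrow> \<not> smooth \<gamma> e \<Longrightarrow> changed_edge \<gamma> \<gamma>' e \<Longrightarrow> k \<le> rank \<gamma> e"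
    and pq: "(p, q) \<in> Edges V N" and qp: "p \<in> set (N q)"
    and steep: "dval \<gamma>' p + 2 \<le> dval \<gamma>' q" and low: "dval \<gamma>' p \<le> k"
  shows "\<not> changed_edge \<gamma> \<gamma>' (p, q)"
proof -
  have q_unmoved_if_p: "dval \<gamma>' q = dval \<gamma> q" if "dval \<gamma>' p = dval \<gamma> p"
    using moves[of q] Dist_le_neighbour[of p N q \<gamma>, OF qp] steep that by fastforce
  have "dval \<gamma>' p = dval \<gamma> p"
  proof (rule ccontr)
    assume p_moved: "dval \<gamma>' p \<noteq> dval \<gamma> p"
    have q_nbr: "q \<in> set (N p)" and "p \<in> V" using pq unfolding Edges_def by auto
    then obtain y where y_nbr: "y \<in> set (N p)" and p_new: "dval \<gamma>' p = dval \<gamma> y + 1"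
      using moves[OF p_moved] by (metis Dist_attained empty_iff)
    have "(p, y) \<in> Edges V N" using \<open>p \<in> V\<close> y_nbr unfolding Edges_def by auto
    then have "smooth \<gamma> (p, y)"
      using below[of "(p, y)"] p_moved p_new low unfolding changed_edge_def rank_def by fastforce
    then have "dval \<gamma> p \<le> dval \<gamma> y" using p_moved p_new unfolding smooth_def by auto
    moreover have "smooth \<gamma> (p, q)"
      using below[OF pq] p_moved p_new low \<open>smooth \<gamma> (p, y)\<close>
      unfolding changed_edge_def rank_def smooth_def by fastforce
    ultimately have "dval \<gamma> q < dval \<gamma>' q" using steep p_new unfolding smooth_def by auto
    then have "dval \<gamma>' q \<le> dval \<gamma> p + 1" using moves[of q] Dist_le_neighbour[of p N q \<gamma>, OF qp] by simp
    then show False using steep p_new \<open>dval \<gamma> p \<le> dval \<gamma> y\<close> by simp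
  qed
  then show ?thesis using q_unmoved_if_p unfolding changed_edge_def by simp
qed

lemma non_smooth_low_edge_unchanged:
  assumes "bfs_graph V r N"
    and moves: "\<And>x. dval \<gamma>' x \<noteq> dval \<gamma> x \<Longrightarrow> dval \<gamma>' x = Dist N \<gamma> x"
    and below: "\<And>e. e \<in> Edges V N \<Longrightarrow> \<not> smooth \<gamma> e \<Longrightarrow> changed_edge \<gamma> \<gamma>' e \<Longrightarrow> k \<le> rank \<gamma> e"
    and e: "e \<in> Edges V N" "\<not> smooth \<gamma>' e" "rank \<gamma>' e \<le> k"
  shows "\<not> changed_edge \<gamma> \<gamma>' e"
proof -
  obtain p q where pq: "e = (p, q)" by fastforce
  have qp: "(q, p) \<in> Edges V N" using Edges_sym[OF assms(1)] e(1) pq by simp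
  have nbrs: "p \<in> set (N q)" "q \<in> set (N p)" using qp e(1) pq unfolding Edges_def by auto
  consider "dval \<gamma>' p + 2 \<le> dval \<gamma>' q" | "dval \<gamma>' q + 2 \<le> dval \<gamma>' p"
    using e(2) unfolding pq not_smooth_iff by blast
  then show ?thesis
  proof cases
    case 1
    then show ?thesis
      using steep_edge_unchanged[OF moves below e(1)[unfolded pq] nbrs(1)] e(3) pq
      unfolding rank_def by simp
  next
    case 2
    then have "\<not> changed_edge \<gamma> \<gamma>' (q, p)"
      using steep_edge_unchanged[OF moves below qp nbrs(2)] e(3) pq unfolding rank_def by simp
    then show ?thesis using pq unfolding changed_edge_def by auto
  qed
qed

theorem lemma6:
  fixes V :: "'v set" and r :: 'v and N :: "'v \<Rightarrow> 'v list" and \<gamma> \<gamma>' :: "'v cfg"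
  assumes "bfs_graph V r N"
    and "valid_cfg V N \<gamma>"
    and "d_step V r N \<gamma> \<gamma>'"
    and "\<not> smooth_dstep N \<gamma> \<gamma>'"
  defines "K \<equiv> {rank \<gamma> e | e. e \<in> Edges V N \<and> \<not> smooth \<gamma> e \<and>
                  (dval \<gamma>' (fst e) \<noteq> dval \<gamma> (fst e) \<or> dval \<gamma>' (snd e) \<noteq> dval \<gamma> (snd e))}"
  shows "K \<noteq> {} \<and>
         (\<forall>e\<in>Edges V N. rank \<gamma>' e \<le> Min K \<and> \<not> smooth \<gamma>' e \<longrightarrow>
           rank \<gamma> e = rank \<gamma>' e \<and> \<not> smooth \<gamma> e) \<and>
         (\<forall>e\<in>Edges V N. rank \<gamma> e < Min K \<and> \<not> smooth \<gamma> e \<longrightarrow>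
           rank \<gamma>' e = rank \<gamma> e \<and> \<not> smooth \<gamma>' e) \<and>
         (\<exists>e\<in>Edges V N. rank \<gamma> e = Min K \<and> \<not> smooth \<gamma> e \<and>
           (\<not> smooth \<gamma>' e \<longrightarrow> rank \<gamma>' e > rank \<gamma> e))"
proof -
  define C where "C = {e \<in> Edges V N. \<not> smooth \<gamma> e \<and> changed_edge \<gamma> \<gamma>' e}"
  have K_C: "K = rank \<gamma> ` C" unfolding K_def C_def changed_edge_def image_def by blast
  have moves: "\<And>x. dval \<gamma>' x \<noteq> dval \<gamma> x \<Longrightarrow> dval \<gamma>' x = Dist N \<gamma> x"
    using d_step_moved_node[OF assms(3)] by blast
  have "finite K" unfolding K_C C_def using finite_Edges[OF assms(1)] by simp
  obtain p q where "dval \<gamma>' p \<noteq> dval \<gamma> p" "q \<in> set (N p)" "\<not> smooth \<gamma> (p, q)"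
    using assms(4) unfolding smooth_dstep_def by blast
  then have "(p, q) \<in> C"
    using d_step_moved_node[OF assms(3)] unfolding C_def Edges_def changed_edge_def by auto
  then have "K \<noteq> {}" unfolding K_C by blast
  have below: "\<And>e. e \<in> Edges V N \<Longrightarrow> \<not> smooth \<gamma> e \<Longrightarrow> changed_edge \<gamma> \<gamma>' e \<Longrightarrow> Min K \<le> rank \<gamma> e"
    using \<open>finite K\<close> unfolding K_C C_def by auto
  note low_unchanged = non_smooth_low_edge_unchanged[OF assms(1) moves below]
  have claim_i: "\<forall>e\<in>Edges V N. rank \<gamma>' e \<le> Min K \<and> \<not> smooth \<gamma>' e \<longrightarrow>
           rank \<gamma> e = rank \<gamma>' e \<and> \<not> smooth \<gamma> e"
    using low_unchanged unchanged_edge_rank_smooth by fastforce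
  have claim_ii: "\<forall>e\<in>Edges V N. rank \<gamma> e < Min K \<and> \<not> smooth \<gamma> e \<longrightarrow>
           rank \<gamma>' e = rank \<gamma> e \<and> \<not> smooth \<gamma>' e"
    using below unchanged_edge_rank_smooth leD by blast
  obtain e where e: "e \<in> C" "rank \<gamma> e = Min K"
    using Min_in[OF \<open>finite K\<close> \<open>K \<noteq> {}\<close>] unfolding K_C by auto
  have "\<not> smooth \<gamma>' e \<longrightarrow> rank \<gamma>' e > rank \<gamma> e"
    using low_unchanged[of e] e unfolding C_def by (metis mem_Collect_eq not_le)
  then have claim_iii: "\<exists>e\<in>Edges V N. rank \<gamma> e = Min K \<and> \<not> smooth \<gamma> e \<and>
           (\<not> smooth \<gamma>' e \<longrightarrow> rank \<gamma>' e > rank \<gamma> e)"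
    using e unfolding C_def by blast
  show ?thesis using \<open>K \<noteq> {}\<close> claim_i claim_ii claim_iii by blast
qed

end
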